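(* Let $X$ be a countably infinite set and let $A$ be a finite set. Then the lattice $\mathrm{Cl}(A)$ of all clones on $A$ is isomorphic to an interval of the lattice $\mathrm{Cl}_{loc}(X)$ of local clones on $X$.
   Context: For a set $Y$ and $n\ge1$, an $n$-ary operation on $Y$ is a map $Y^n\to Y$. A clone on $Y$ is a set of finitary operations on $Y$ containing all projections $\pi^n_k(x_1,\dots,x_n)=x_k$ and closed under composition (if $f$ is $n$-ary in the set and $g_1,\dots,g_n$ are $m$-ary in the set then $f(g_1,\dots,g_n)$ is in the set); $\mathrm{Cl}(Y)$ is the lattice of all clones on $Y$ ordered by inclusion. Giving $X$ the discrete topology and $X^{X^n}$ the product topology, a clone on $X$ is local if for each $n$ its set of $n$-ary operations is closed in $X^{X^n}$; equivalently, an $n$-ary operation $g$ belongs to the clone whenever for every finite $B\subseteq X^n$ some $n$-ary operation of the clone agrees with $g$ on $B$. $\mathrm{Cl}_{loc}(X)$ is the complete lattice of local clones on $X$ ordered by inclusion. An interval of a lattice is a set $\{c: a\le c\le b\}$ for some $a\le b$, with the induced order. *)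

theory Defs
  imports "HOL-Library.FuncSet" "HOL-Library.Countable_Set"
begin

text \<open>Since
distinct arities may give equal functions (e.g. Y empty), operations are tagged
with their arity: an element of a clone is a pair (n, f).\<close>

definition tuples :: "'a set \<Rightarrow> nat \<Rightarrow> 'a list set" where
  "tuples Y n = {xs. length xs = n \<and> set xs \<subseteq> Y}"

definition ops :: "'a set \<Rightarrow> nat \<Rightarrow> ('a list \<Rightarrow> 'a) set" where
  "ops Y n = tuples Y n \<rightarrow>\<^sub>E Y"

definition proj :: "'a set \<Rightarrow> nat \<Rightarrow> nat \<Rightarrow> 'a list \<Rightarrow> 'a" where
  "proj Y n k = (\<lambda>xs\<in>tuples Y n. xs ! k)"

definition compose :: "'a set \<Rightarrow> nat \<Rightarrow> ('a list \<Rightarrow> 'a) \<Rightarrow> ('a list \<Rightarrow> 'a) list \<Rightarrow> 'a list \<Rightarrow> 'a" where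
  "compose Y m f gs = (\<lambda>xs\<in>tuples Y m. f (map (\<lambda>g. g xs) gs))"

definition is_clone :: "'a set \<Rightarrow> (nat \<times> ('a list \<Rightarrow> 'a)) set \<Rightarrow> bool" where
  "is_clone Y C \<longleftrightarrow>
     (\<forall>(n, f)\<in>C. n \<ge> 1 \<and> f \<in> ops Y n) \<and>
     (\<forall>n k. 1 \<le> n \<and> k < n \<longrightarrow> (n, proj Y n k) \<in> C) \<and>
     (\<forall>n m f gs. (n, f) \<in> C \<and> length gs = n \<and> (\<forall>g\<in>set gs. (m, g) \<in> C)
        \<longrightarrow> (m, compose Y m f gs) \<in> C)"

definition clones :: "'a set \<Rightarrow> (nat \<times> ('a list \<Rightarrow> 'a)) set set" where
  "clones Y = {C. is_clone Y C}"

text \<open>Local clones: closed in the topology of pointwise convergence (X discrete).\<close>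
definition is_local_clone :: "'a set \<Rightarrow> (nat \<times> ('a list \<Rightarrow> 'a)) set \<Rightarrow> bool" where
  "is_local_clone X C \<longleftrightarrow> is_clone X C \<and>
     (\<forall>n g. n \<ge> 1 \<and> g \<in> ops X n \<and>
        (\<forall>B. finite B \<and> B \<subseteq> tuples X n \<longrightarrow> (\<exists>f. (n, f) \<in> C \<and> (\<forall>b\<in>B. f b = g b)))
        \<longrightarrow> (n, g) \<in> C)"

definition local_clones :: "'a set \<Rightarrow> (nat \<times> ('a list \<Rightarrow> 'a)) set set" where
  "local_clones X = {C. is_local_clone X C}"

end

theory Submission
  imports Defs
begin

text \<open>Fix an injection \<open>e\<close> of \<open>A\<close> into \<open>X\<close>. A clone \<open>C\<close> on \<open>A\<close> is sent to the set of
  operations on \<open>X\<close> that preserve \<open>e ` A\<close> and whose restriction to \<open>e ` A\<close> belongs (up to \<open>e\<close>)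
  to \<open>C\<close>. Membership only depends on the finitely many values on \<open>e ` A\<close>, so this clone is
  local, and the map is an order embedding. Its image is the whole interval between the images of
  the least clone and of the clone of all operations: if \<open>D\<close> lies in that interval and \<open>f\<close>
  restricts to an operation that some \<open>f' \<in> D\<close> also restricts to, then \<open>f\<close> is obtained from
  \<open>f'\<close> and projections by the \<open>(n+1)\<close>-ary operation which returns its first argument when the
  others lie in \<open>e ` A\<close> and applies \<open>f\<close> to them otherwise; that operation restricts to a
  projection, so it lies in the lower end of the interval.\<close>

lemma map_in_tuples: "xs \<in> tuples A n \<Longrightarrow> e ` A \<subseteq> X \<Longrightarrow> map e xs \<in> tuples X n"
  unfolding tuples_def by auto

lemma tuples_image: "tuples (e ` A) n = map e ` tuples A n"
proof -
  have "tuples (e ` A) n = {ys \<in> lists (e ` A). length ys = n}"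
    by (auto simp: tuples_def)
  also have "\<dots> = map e ` tuples A n"
    by (auto simp: lists_image tuples_def)
  finally show ?thesis .
qed

lemma finite_tuples: "finite A \<Longrightarrow> finite (tuples A n)"
  unfolding tuples_def using finite_lists_length_eq[of A n] by (simp add: conj_commute)

lemma ops_apply: "f \<in> ops Y n \<Longrightarrow> xs \<in> tuples Y n \<Longrightarrow> f xs \<in> Y"
  unfolding ops_def by auto

lemma ops_eqI:
  "f \<in> ops Y n \<Longrightarrow> g \<in> ops Y n \<Longrightarrow> (\<And>xs. xs \<in> tuples Y n \<Longrightarrow> f xs = g xs) \<Longrightarrow> f = g"
  unfolding ops_def by (rule PiE_ext) auto

lemma proj_in_ops: "k < n \<Longrightarrow> proj Y n k \<in> ops Y n"
  unfolding ops_def proj_def tuples_def by auto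

lemma compose_in_ops:
  assumes "f \<in> ops Y n" and "length gs = n" and "\<forall>g\<in>set gs. g \<in> ops Y m"
  shows "compose Y m f gs \<in> ops Y m"
proof -
  have "map (\<lambda>g. g xs) gs \<in> tuples Y n" if "xs \<in> tuples Y m" for xs
    using assms(2,3) that by (auto simp: tuples_def ops_apply)
  then show ?thesis
    using assms(1) unfolding compose_def ops_def by auto
qed

lemma map_proj_tuple: "xs \<in> tuples Y n \<Longrightarrow> map (\<lambda>g. g xs) (map (proj Y n) [0..<n]) = xs"
  by (auto simp: proj_def tuples_def comp_def) (metis map_nth)

lemma ex_list_all2: "\<forall>x\<in>set xs. \<exists>y. P x y \<Longrightarrow> \<exists>ys. list_all2 P xs ys"
  by (induction xs) auto

lemma is_cloneI:
  assumes "\<And>n f. (n, f) \<in> C \<Longrightarrow> 1 \<le> n \<and> f \<in> ops Y n"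
    and "\<And>n k. k < n \<Longrightarrow> (n, proj Y n k) \<in> C"
    and "\<And>n m f gs. (n, f) \<in> C \<Longrightarrow> length gs = n \<Longrightarrow> \<forall>g\<in>set gs. (m, g) \<in> C
      \<Longrightarrow> (m, compose Y m f gs) \<in> C"
  shows "is_clone Y C"
  using assms unfolding is_clone_def by auto

lemma is_clone_ops: "is_clone Y C \<Longrightarrow> (n, f) \<in> C \<Longrightarrow> 1 \<le> n \<and> f \<in> ops Y n"
  unfolding is_clone_def by fast

lemma is_clone_proj: "is_clone Y C \<Longrightarrow> k < n \<Longrightarrow> (n, proj Y n k) \<in> C"
  unfolding is_clone_def by simp

lemma is_clone_compose:
  "is_clone Y C \<Longrightarrow> (n, f) \<in> C \<Longrightarrow> length gs = n \<Longrightarrow> \<forall>g\<in>set gs. (m, g) \<in> C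
    \<Longrightarrow> (m, compose Y m f gs) \<in> C"
  unfolding is_clone_def by blast

definition all_ops :: "'a set \<Rightarrow> (nat \<times> ('a list \<Rightarrow> 'a)) set" where
  "all_ops Y = {(n, f). 1 \<le> n \<and> f \<in> ops Y n}"

lemma is_clone_all_ops: "is_clone Y (all_ops Y)"
  unfolding is_clone_def all_ops_def
  by (auto simp: proj_in_ops compose_in_ops) (metis Suc_le_length_iff list.set_intros(1))

lemma clone_subset_all_ops: "is_clone Y C \<Longrightarrow> C \<subseteq> all_ops Y"
  unfolding all_ops_def by (auto dest: is_clone_ops)

lemma is_clone_Inter:
  assumes "K \<subseteq> clones Y" and "K \<noteq> {}"
  shows "is_clone Y (\<Inter>K)"
proof (rule is_cloneI)
  have K: "is_clone Y C" if "C \<in> K" for C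
    using assms(1) that by (auto simp: clones_def)
  then show "\<And>n f. (n, f) \<in> \<Inter>K \<Longrightarrow> 1 \<le> n \<and> f \<in> ops Y n"
    using assms(2) is_clone_ops by blast
  show "\<And>n k. k < n \<Longrightarrow> (n, proj Y n k) \<in> \<Inter>K"
    using K is_clone_proj by blast
  fix n m f gs
  assume f: "(n, f) \<in> \<Inter>K" and len: "length gs = n" and gs: "\<forall>g\<in>set gs. (m, g) \<in> \<Inter>K"
  show "(m, compose Y m f gs) \<in> \<Inter>K"
  proof
    fix C assume "C \<in> K"
    with f gs have "(n, f) \<in> C" and "\<forall>g\<in>set gs. (m, g) \<in> C"
      by auto
    then show "(m, compose Y m f gs) \<in> C"
      using is_clone_compose[OF K[OF \<open>C \<in> K\<close>]] len by blast
  qed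
qed

lemma Inter_clones_in_clones: "\<Inter>(clones Y) \<in> clones Y"
proof -
  have "all_ops Y \<in> clones Y"
    by (simp add: clones_def is_clone_all_ops)
  then have "is_clone Y (\<Inter>(clones Y))"
    by (intro is_clone_Inter) auto
  then show ?thesis
    by (simp add: clones_def)
qed

lemma is_clone_related:
  assumes C: "is_clone Y C"
    and R_proj: "\<And>n k. k < n \<Longrightarrow> R n (proj Z n k) (proj Y n k)"
    and R_compose: "\<And>n m f c gs cs. R n f c \<Longrightarrow> list_all2 (R m) gs cs \<Longrightarrow> length gs = n
      \<Longrightarrow> \<forall>g\<in>set gs. g \<in> ops Z m \<Longrightarrow> \<forall>c\<in>set cs. c \<in> ops Y m
      \<Longrightarrow> R m (compose Z m f gs) (compose Y m c cs)"
  shows "is_clone Z {(n, f) \<in> all_ops Z. \<exists>c. (n, c) \<in> C \<and> R n f c}"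
    (is "is_clone Z ?S")
proof (rule is_cloneI)
  show "1 \<le> n \<and> f \<in> ops Z n" if "(n, f) \<in> ?S" for n f
    using that by (simp add: all_ops_def)
  show "(n, proj Z n k) \<in> ?S" if "k < n" for n k
    using is_clone_proj[OF is_clone_all_ops that] is_clone_proj[OF C that] R_proj[OF that] by auto
  show "(m, compose Z m f gs) \<in> ?S"
    if f: "(n, f) \<in> ?S" and len: "length gs = n" and gs: "\<forall>g\<in>set gs. (m, g) \<in> ?S"
    for n m f gs
  proof -
    obtain c where c: "(n, c) \<in> C" "R n f c"
      using f by blast
    have "\<forall>g\<in>set gs. \<exists>c. (m, c) \<in> C \<and> R m g c"
      using gs by auto
    from ex_list_all2[OF this]
    obtain cs where cs: "list_all2 (\<lambda>g c. (m, c) \<in> C \<and> R m g c) gs cs" ..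
    have csC: "\<forall>c\<in>set cs. (m, c) \<in> C" and "length cs = n"
      using cs len by (auto simp: list_all2_conv_all_nth in_set_conv_nth)
    then have "(m, compose Y m c cs) \<in> C"
      using is_clone_compose[OF C c(1)] by blast
    moreover have "(m, compose Z m f gs) \<in> all_ops Z"
    proof -
      have "(n, f) \<in> all_ops Z" and "\<forall>g\<in>set gs. (m, g) \<in> all_ops Z"
        using f gs by auto
      then show ?thesis
        using is_clone_compose[OF is_clone_all_ops] len by blast
    qed
    moreover have "R m (compose Z m f gs) (compose Y m c cs)"
    proof (rule R_compose[OF c(2) _ len])
      show "list_all2 (R m) gs cs"
        using cs by (rule list_all2_mono) blast
      show "\<forall>g\<in>set gs. g \<in> ops Z m" and "\<forall>c\<in>set cs. c \<in> ops Y m"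
        using gs csC is_clone_ops[OF C] by (auto simp: all_ops_def)
    qed
    ultimately show ?thesis
      by blast
  qed
qed

section \<open>Operations on \<open>X\<close> restricting to operations on \<open>A\<close>\<close>

definition restricts_to :: "('a \<Rightarrow> 'x) \<Rightarrow> 'a set \<Rightarrow> nat \<Rightarrow> ('x list \<Rightarrow> 'x) \<Rightarrow> ('a list \<Rightarrow> 'a) \<Rightarrow> bool"
  where "restricts_to e A n f c \<longleftrightarrow> (\<forall>xs\<in>tuples A n. f (map e xs) = e (c xs))"

lemma restricts_to_proj:
  assumes "e ` A \<subseteq> X" and "k < n"
  shows "restricts_to e A n (proj X n k) (proj A n k)"
  using assms map_in_tuples[OF _ assms(1)] by (auto simp: restricts_to_def proj_def tuples_def)

lemma restricts_to_compose:
  assumes eX: "e ` A \<subseteq> X" and f: "restricts_to e A n f c"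
    and gs: "list_all2 (restricts_to e A m) gs cs" and len: "length cs = n"
    and cs: "\<forall>c\<in>set cs. c \<in> ops A m"
  shows "restricts_to e A m (compose X m f gs) (compose A m c cs)"
  unfolding restricts_to_def
proof
  fix xs assume xs: "xs \<in> tuples A m"
  have gs_xs: "map (\<lambda>g. g (map e xs)) gs = map e (map (\<lambda>c. c xs) cs)"
    using gs xs by (induction rule: list_all2_induct) (auto simp: restricts_to_def)
  have "map (\<lambda>c. c xs) cs \<in> tuples A n"
    using len cs xs by (auto simp: tuples_def ops_apply)
  then have "f (map (\<lambda>g. g (map e xs)) gs) = e (c (map (\<lambda>c. c xs) cs))"
    using f gs_xs unfolding restricts_to_def by (metis map_map)
  then show "compose X m f gs (map e xs) = e (compose A m c cs xs)"
    using xs map_in_tuples[OF xs eX] by (simp add: compose_def)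
qed

lemma restricts_to_unique:
  assumes "inj_on e A" and "c \<in> ops A n" and "d \<in> ops A n"
    and "restricts_to e A n f c" and "restricts_to e A n f d"
  shows "c = d"
  using assms by (intro ops_eqI[of c A n d]) (auto simp: restricts_to_def inj_on_eq_iff ops_apply)

lemma ex_restricts_to:
  assumes inj: "inj_on e A" and eX: "e ` A \<subseteq> X" and x0: "x0 \<in> X" and c: "c \<in> ops A n"
  shows "\<exists>f\<in>ops X n. restricts_to e A n f c"
proof
  define f where
    "f = (\<lambda>ys\<in>tuples X n. if set ys \<subseteq> e ` A then e (c (map (inv_into A e) ys)) else x0)"
  have "map (inv_into A e) ys \<in> tuples A n" if "set ys \<subseteq> e ` A" "length ys = n" for ys
    using that by (auto simp: tuples_def inv_into_into)
  then have "f ys \<in> X" if "ys \<in> tuples X n" for ys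
    using that ops_apply[OF c] eX x0 unfolding f_def by (auto simp: tuples_def)
  then show "f \<in> ops X n"
    unfolding ops_def f_def by auto
  have "map (inv_into A e) (map e xs) = xs" if "set xs \<subseteq> A" for xs
    using that inj by (induction xs) auto
  then show "restricts_to e A n f c"
    using map_in_tuples[OF _ eX] by (auto simp: restricts_to_def f_def tuples_def)
qed

lemma restricts_to_congI:
  assumes "restricts_to e A n f c" and "\<And>xs. xs \<in> tuples A n \<Longrightarrow> g (map e xs) = f (map e xs)"
  shows "restricts_to e A n g c"
  using assms by (simp add: restricts_to_def)

section \<open>Lifting clones from \<open>A\<close> to \<open>X\<close>\<close>

definition lift_clone :: "'x set \<Rightarrow> ('a \<Rightarrow> 'x) \<Rightarrow> 'a set \<Rightarrow> (nat \<times> ('a list \<Rightarrow> 'a)) set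
    \<Rightarrow> (nat \<times> ('x list \<Rightarrow> 'x)) set" where
  "lift_clone X e A C = {(n, f) \<in> all_ops X. \<exists>c. (n, c) \<in> C \<and> restricts_to e A n f c}"

definition restrict_clone :: "'x set \<Rightarrow> ('a \<Rightarrow> 'x) \<Rightarrow> 'a set \<Rightarrow> (nat \<times> ('x list \<Rightarrow> 'x)) set
    \<Rightarrow> (nat \<times> ('a list \<Rightarrow> 'a)) set" where
  "restrict_clone X e A D = {(n, c) \<in> all_ops A. \<exists>f. (n, f) \<in> D \<and> restricts_to e A n f c}"

lemma lift_clone_mono: "C \<subseteq> D \<Longrightarrow> lift_clone X e A C \<subseteq> lift_clone X e A D"
  unfolding lift_clone_def by blast

lemma is_clone_lift_clone:
  assumes "e ` A \<subseteq> X" and "is_clone A C"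
  shows "is_clone X (lift_clone X e A C)"
  unfolding lift_clone_def
proof (rule is_clone_related[OF assms(2)])
  show "\<And>n k. k < n \<Longrightarrow> restricts_to e A n (proj X n k) (proj A n k)"
    using assms(1) by (rule restricts_to_proj)
  fix n m f c gs cs
  assume f: "restricts_to e A n f c" and gs: "list_all2 (restricts_to e A m) gs cs"
    and "length gs = n" and cs: "\<forall>c\<in>set cs. c \<in> ops A m"
  then have "length cs = n"
    by (auto dest: list_all2_lengthD)
  with assms(1) f gs cs show "restricts_to e A m (compose X m f gs) (compose A m c cs)"
    by (intro restricts_to_compose)
qed

lemma is_local_clone_lift_clone:
  assumes eX: "e ` A \<subseteq> X" and A: "finite A" and C: "is_clone A C"
  shows "is_local_clone X (lift_clone X e A C)"
  unfolding is_local_clone_def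
proof (intro conjI allI impI)
  show "is_clone X (lift_clone X e A C)"
    using eX C by (rule is_clone_lift_clone)
  fix n g
  assume "1 \<le> n \<and> g \<in> ops X n \<and> (\<forall>B. finite B \<and> B \<subseteq> tuples X n
      \<longrightarrow> (\<exists>f. (n, f) \<in> lift_clone X e A C \<and> (\<forall>b\<in>B. f b = g b)))"
  then have g: "1 \<le> n" "g \<in> ops X n"
    and approx: "\<And>B. finite B \<Longrightarrow> B \<subseteq> tuples X n
      \<Longrightarrow> \<exists>f. (n, f) \<in> lift_clone X e A C \<and> (\<forall>b\<in>B. f b = g b)"
    by auto
  have "finite (map e ` tuples A n)" and "map e ` tuples A n \<subseteq> tuples X n"
    using finite_tuples[OF A] map_in_tuples[OF _ eX] by auto
  from approx[OF this] obtain f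
    where f: "(n, f) \<in> lift_clone X e A C" and fg: "\<forall>b\<in>map e ` tuples A n. f b = g b"
    by blast
  from f obtain c where c: "(n, c) \<in> C" and "restricts_to e A n f c"
    by (auto simp: lift_clone_def)
  with fg have "restricts_to e A n g c"
    by (auto intro: restricts_to_congI)
  with c g show "(n, g) \<in> lift_clone X e A C"
    by (auto simp: lift_clone_def all_ops_def)
qed

lemma lift_clone_subset_iff:
  assumes inj: "inj_on e A" and eX: "e ` A \<subseteq> X" and x0: "x0 \<in> X"
    and C: "is_clone A C" and D: "is_clone A D"
  shows "lift_clone X e A C \<subseteq> lift_clone X e A D \<longleftrightarrow> C \<subseteq> D"
proof
  assume sub: "lift_clone X e A C \<subseteq> lift_clone X e A D"
  show "C \<subseteq> D"
  proof clarify
    fix n c assume nc: "(n, c) \<in> C"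
    then have c: "1 \<le> n" "c \<in> ops A n"
      using is_clone_ops[OF C] by auto
    then obtain f where "f \<in> ops X n" "restricts_to e A n f c"
      using ex_restricts_to[OF inj eX x0] by blast
    then have "(n, f) \<in> lift_clone X e A D"
      using sub nc c by (auto simp: lift_clone_def all_ops_def)
    then obtain d where "(n, d) \<in> D" "restricts_to e A n f d"
      by (auto simp: lift_clone_def)
    moreover from this have "d = c"
      using restricts_to_unique[OF inj _ c(2)] \<open>restricts_to e A n f c\<close> is_clone_ops[OF D] by blast
    ultimately show "(n, c) \<in> D"
      by simp
  qed
qed (rule lift_clone_mono)

lemma is_clone_restrict_clone:
  assumes eX: "e ` A \<subseteq> X" and D: "is_clone X D"
  shows "is_clone A (restrict_clone X e A D)"
  unfolding restrict_clone_def
proof (rule is_clone_related[OF D, where R = "\<lambda>n c f. restricts_to e A n f c"])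
  show "\<And>n k. k < n \<Longrightarrow> restricts_to e A n (proj X n k) (proj A n k)"
    using eX by (rule restricts_to_proj)
  fix n m c f cs gs
  assume "restricts_to e A n f c" "list_all2 (\<lambda>c f. restricts_to e A m f c) cs gs"
    "length cs = n" "\<forall>c\<in>set cs. c \<in> ops A m"
  moreover from this have "list_all2 (restricts_to e A m) gs cs"
    by (auto simp: list_all2_conv_all_nth)
  ultimately show "restricts_to e A m (compose X m f gs) (compose A m c cs)"
    using restricts_to_compose[OF eX] by blast
qed

section \<open>The image of the lifting\<close>

definition switch :: "'x set \<Rightarrow> 'x set \<Rightarrow> nat \<Rightarrow> ('x list \<Rightarrow> 'x) \<Rightarrow> 'x list \<Rightarrow> 'x" where
  "switch X B n f = (\<lambda>ys\<in>tuples X (Suc n). if set (tl ys) \<subseteq> B then hd ys else f (tl ys))"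

lemma switch_in_ops:
  assumes "f \<in> ops X n"
  shows "switch X B n f \<in> ops X (Suc n)"
  unfolding ops_def switch_def restrict_PiE_iff
proof
  fix ys assume "ys \<in> tuples X (Suc n)"
  then obtain y zs where "ys = y # zs" "y \<in> X" "zs \<in> tuples X n"
    by (cases ys) (auto simp: tuples_def)
  then show "(if set (tl ys) \<subseteq> B then hd ys else f (tl ys)) \<in> X"
    using ops_apply[OF assms] by simp
qed

lemma restricts_to_switch:
  assumes eX: "e ` A \<subseteq> X"
  shows "restricts_to e A (Suc n) (switch X (e ` A) n f) (proj A (Suc n) 0)"
  unfolding restricts_to_def
proof
  fix xs assume xs: "xs \<in> tuples A (Suc n)"
  then obtain x zs where "xs = x # zs" and "set zs \<subseteq> A"
    by (cases xs) (auto simp: tuples_def)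
  moreover have "map e xs \<in> tuples X (Suc n)"
    using xs eX by (rule map_in_tuples)
  ultimately show "switch X (e ` A) n f (map e xs) = e (proj A (Suc n) 0 xs)"
    using xs by (auto simp: switch_def proj_def)
qed

lemma compose_switch:
  assumes f: "f \<in> ops X n" and f': "f' \<in> ops X n"
    and agree: "\<And>ys. ys \<in> tuples B n \<Longrightarrow> f' ys = f ys"
  shows "compose X n (switch X B n f) (f' # map (proj X n) [0..<n]) = f"
proof (rule ops_eqI[OF compose_in_ops[OF switch_in_ops[OF f]] f])
  show "\<forall>g\<in>set (f' # map (proj X n) [0..<n]). g \<in> ops X n"
    using f' proj_in_ops by auto
  fix ys assume ys: "ys \<in> tuples X n"
  then have f'ys: "f' ys # ys \<in> tuples X (Suc n)"
    using ops_apply[OF f'] by (simp add: tuples_def)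
  have "compose X n (switch X B n f) (f' # map (proj X n) [0..<n]) ys
      = switch X B n f (map (\<lambda>g. g ys) (f' # map (proj X n) [0..<n]))"
    using ys by (simp add: compose_def)
  also have "map (\<lambda>g. g ys) (f' # map (proj X n) [0..<n]) = f' ys # ys"
    by (simp only: list.map(2) map_proj_tuple[OF ys])
  also have "switch X B n f (f' ys # ys) = (if set ys \<subseteq> B then f' ys else f ys)"
    using f'ys by (simp add: switch_def)
  also have "\<dots> = f ys"
    using ys agree by (auto simp: tuples_def)
  finally show "compose X n (switch X B n f) (f' # map (proj X n) [0..<n]) ys = f ys" .
qed simp

lemma lift_restrict_clone:
  assumes eX: "e ` A \<subseteq> X" and D: "is_clone X D"
    and lower: "lift_clone X e A (\<Inter>(clones A)) \<subseteq> D" and upper: "D \<subseteq> lift_clone X e A (all_ops A)"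
  shows "lift_clone X e A (restrict_clone X e A D) = D"
proof (intro equalityI subrelI)
  fix n f assume f: "(n, f) \<in> D"
  then obtain c where "(n, c) \<in> all_ops A" and "restricts_to e A n f c"
    using upper by (auto simp: lift_clone_def)
  moreover have "(n, f) \<in> all_ops X"
    using f clone_subset_all_ops[OF D] by blast
  ultimately show "(n, f) \<in> lift_clone X e A (restrict_clone X e A D)"
    using f by (auto simp: lift_clone_def restrict_clone_def)
next
  fix n f assume "(n, f) \<in> lift_clone X e A (restrict_clone X e A D)"
  then obtain c f' where f: "1 \<le> n" "f \<in> ops X n" and fc: "restricts_to e A n f c"
    and f'D: "(n, f') \<in> D" and f'c: "restricts_to e A n f' c"
    by (auto simp: lift_clone_def restrict_clone_def all_ops_def)
  have "(Suc n, proj A (Suc n) 0) \<in> \<Inter>(clones A)"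
    by (auto simp: clones_def intro: is_clone_proj)
  then have "(Suc n, switch X (e ` A) n f) \<in> lift_clone X e A (\<Inter>(clones A))"
    using restricts_to_switch[OF eX] switch_in_ops[OF f(2)]
    by (auto simp: lift_clone_def all_ops_def)
  with lower have "(Suc n, switch X (e ` A) n f) \<in> D"
    by blast
  moreover have "length (f' # map (proj X n) [0..<n]) = Suc n"
    by simp
  moreover have "\<forall>g\<in>set (f' # map (proj X n) [0..<n]). (n, g) \<in> D"
    using f'D is_clone_proj[OF D] by auto
  ultimately have "(n, compose X n (switch X (e ` A) n f) (f' # map (proj X n) [0..<n])) \<in> D"
    by (rule is_clone_compose[OF D])
  moreover have "f' ys = f ys" if "ys \<in> tuples (e ` A) n" for ys
    using that fc f'c by (auto simp: tuples_image restricts_to_def)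
  ultimately show "(n, f) \<in> D"
    using compose_switch[OF f(2)] is_clone_ops[OF D f'D] by auto
qed

lemma lift_clone_image:
  assumes eX: "e ` A \<subseteq> X" and A: "finite A"
  shows "lift_clone X e A ` clones A = {D \<in> local_clones X.
      lift_clone X e A (\<Inter>(clones A)) \<subseteq> D \<and> D \<subseteq> lift_clone X e A (all_ops A)}"
proof (intro equalityI subsetI)
  fix D assume "D \<in> lift_clone X e A ` clones A"
  then obtain C where "is_clone A C" "D = lift_clone X e A C"
    by (auto simp: clones_def)
  then show "D \<in> {D \<in> local_clones X.
      lift_clone X e A (\<Inter>(clones A)) \<subseteq> D \<and> D \<subseteq> lift_clone X e A (all_ops A)}"
    using is_local_clone_lift_clone[OF eX A] clone_subset_all_ops
    by (auto simp: local_clones_def clones_def intro!: lift_clone_mono)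
next
  fix D assume "D \<in> {D \<in> local_clones X.
      lift_clone X e A (\<Inter>(clones A)) \<subseteq> D \<and> D \<subseteq> lift_clone X e A (all_ops A)}"
  then have "is_clone X D" and "lift_clone X e A (restrict_clone X e A D) = D"
    using lift_restrict_clone[OF eX] by (auto simp: local_clones_def is_local_clone_def)
  then show "D \<in> lift_clone X e A ` clones A"
    using is_clone_restrict_clone[OF eX] by (metis clones_def image_eqI mem_Collect_eq)
qed

theorem proposition2p2:
  fixes X :: "'x set" and A :: "'a set"
  assumes "countable X" and "infinite X" and "finite A"
  shows "\<exists>L U \<phi>. L \<in> local_clones X \<and> U \<in> local_clones X \<and> L \<subseteq> U \<and>
           bij_betw \<phi> (clones A) {C \<in> local_clones X. L \<subseteq> C \<and> C \<subseteq> U} \<and>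
           (\<forall>C\<in>clones A. \<forall>D\<in>clones A. C \<subseteq> D \<longleftrightarrow> \<phi> C \<subseteq> \<phi> D)"
proof -
  obtain B where "finite B" "card B = card A" "B \<subseteq> X"
    using infinite_arbitrarily_large[OF assms(2)] by blast
  then obtain e where inj: "inj_on e A" and eX: "e ` A \<subseteq> X"
    using card_le_inj[OF assms(3)] by (metis order.refl subset_trans)
  obtain x0 where x0: "x0 \<in> X"
    using assms(2) by fastforce
  let ?\<phi> = "lift_clone X e A"
  let ?L = "?\<phi> (\<Inter>(clones A))" and ?U = "?\<phi> (all_ops A)"
  have order: "\<forall>C\<in>clones A. \<forall>D\<in>clones A. C \<subseteq> D \<longleftrightarrow> ?\<phi> C \<subseteq> ?\<phi> D"
    using lift_clone_subset_iff[OF inj eX x0] by (simp add: clones_def)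
  then have "inj_on ?\<phi> (clones A)"
    by (intro inj_onI) (metis subset_antisym order_refl)
  moreover have image: "?\<phi> ` clones A = {C \<in> local_clones X. ?L \<subseteq> C \<and> C \<subseteq> ?U}"
    using eX assms(3) by (rule lift_clone_image)
  ultimately have "bij_betw ?\<phi> (clones A) {C \<in> local_clones X. ?L \<subseteq> C \<and> C \<subseteq> ?U}"
    by (simp add: bij_betw_def)
  moreover have "?L \<in> local_clones X" and "?U \<in> local_clones X"
    using image Inter_clones_in_clones is_clone_all_ops by (auto simp: clones_def)
  moreover have "?L \<subseteq> ?U"
    using Inter_clones_in_clones clone_subset_all_ops by (auto simp: clones_def intro!: lift_clone_mono)
  ultimately show ?thesis
    using order by blast
qed

end
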